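(* If $x=x_1\cdots x_n\in\mathrm{Sort}_n(123,321)$, then $x_1\in\{n-1,n\}$.
   Context: A permutation contains a pattern $p$ if it has a subsequence order-isomorphic to $p$; otherwise it avoids $p$. For a set $T$ of patterns, the map $s_T$ is defined as follows: the entries of the input permutation are read from left to right, with an initially empty stack. At each step, if the input is nonempty and pushing the next input entry onto the stack produces a stack whose contents, read from top to bottom, avoid every pattern in $T$, that entry is pushed; otherwise the top entry of the stack is popped and appended to the output. When the input is exhausted, the remaining stack entries are popped one at a time to the output. Write $s_{\sigma,\tau}=s_{\{\sigma,\tau\}}$ and $s=s_{\{21\}}$ (West's stack-sorting map). $\mathrm{Sort}_n(\sigma,\tau)$ is the set of $x\in S_n$ with $s(s_{\sigma,\tau}(x))=12\cdots n$. *)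

theory Defs
  imports "HOL-Library.Sublist"
begin

definition perm_of :: "nat \<Rightarrow> nat list \<Rightarrow> bool" where
  "perm_of n x \<longleftrightarrow> distinct x \<and> set x = {1..n}"

definition order_iso :: "nat list \<Rightarrow> nat list \<Rightarrow> bool" where
  "order_iso ys p \<longleftrightarrow> length ys = length p \<and>
     (\<forall>i<length ys. \<forall>j<length ys. (ys ! i < ys ! j \<longleftrightarrow> p ! i < p ! j))"

definition contains :: "nat list \<Rightarrow> nat list \<Rightarrow> bool" where
  "contains xs p \<longleftrightarrow> (\<exists>ys. subseq ys xs \<and> order_iso ys p)"

definition avoids_all :: "nat list set \<Rightarrow> nat list \<Rightarrow> bool" where
  "avoids_all T xs \<longleftrightarrow> (\<forall>p\<in>T. \<not> contains xs p)"

text \<open>Stack machine: input, stack (head = top); returns the output word.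
  When the stack is empty, the next entry is pushed (a one-entry stack avoids
  every pattern of length at least 2, so this is the only sensible reading).\<close>

function stack_run :: "nat list set \<Rightarrow> nat list \<Rightarrow> nat list \<Rightarrow> nat list" where
  "stack_run T [] st = st"
| "stack_run T (a # inp) st =
     (if st = [] \<or> avoids_all T (a # st) then stack_run T inp (a # st)
      else hd st # stack_run T (a # inp) (tl st))"
  by pat_completeness auto
termination
  by (relation "measure (\<lambda>(T, inp, st). 2 * length inp + length st)") auto

definition sT :: "nat list set \<Rightarrow> nat list \<Rightarrow> nat list" where
  "sT T x = stack_run T x []"

definition s_pair :: "nat list \<Rightarrow> nat list \<Rightarrow> nat list \<Rightarrow> nat list" where
  "s_pair \<sigma> \<tau> = sT {\<sigma>, \<tau>}"

definition west_s :: "nat list \<Rightarrow> nat list" where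
  "west_s = sT {[2,1]}"

definition Sort :: "nat \<Rightarrow> nat list \<Rightarrow> nat list \<Rightarrow> nat list set" where
  "Sort n \<sigma> \<tau> = {x. perm_of n x \<and> west_s (s_pair \<sigma> \<tau> x) = [1..<n+1]}"

end

theory Submission
  imports Defs "HOL-Library.Multiset"
begin

text \<open>Let a = x_1 and suppose a \<le> n - 2. West's map sorts no permutation containing 231,
  because the entry playing the role of 2 must leave the stack when the 3 arrives, before the 1 is
  read; so it suffices to find a 231 in y = s_{123,321}(x). A stack of two entries contains no
  pattern of length three, so a stays at the bottom of the stack until the input is exhausted.
  When n is pushed, the entries below it increase from top to bottom (otherwise n would start a
  321), so there are at most two of them: just a, or s a with s < a.
  If some entry larger than a follows n, let b be the first one; the entries read between n and
  b are smaller than a. Either they leave n a in place, and b is pushed on top of it, giving the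
  231 b n a; or they pop n and s, leaving some u < s directly above a, and b is pushed on top of
  u, giving the 231 s b u. Otherwise n - 1 precedes n; it has been output before n is pushed
  (else n (n - 1) a would be a 321), giving the 231 (n - 1) n a.\<close>

lemma subseq_Cons_iff:
  "subseq (u # us) (x # xs) \<longleftrightarrow> u = x \<and> subseq us xs \<or> subseq (u # us) xs"
  by (auto dest: subseq_Cons')

lemma subseq_pair_Cons_iff:
  "subseq [v,w] (x # xs) \<longleftrightarrow> v = x \<and> w \<in> set xs \<or> subseq [v,w] xs"
  unfolding subseq_Cons_iff subseq_singleton_left by blast

lemma subseq_pair_3:
  "subseq [v,w] [q,r,t] \<longleftrightarrow> v = q \<and> w = r \<or> v = q \<and> w = t \<or> v = r \<and> w = t"
  unfolding subseq_pair_Cons_iff by auto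

lemma subseq_last: "y \<in> set xs \<Longrightarrow> y \<noteq> last xs \<Longrightarrow> subseq [y, last xs] xs"
proof -
  assume "y \<in> set xs" "y \<noteq> last xs"
  then obtain ys zs where xs: "xs = ys @ y # zs" and "zs \<noteq> []"
    by (metis last_snoc split_list)
  then have "last xs \<in> set zs" by simp
  then show ?thesis unfolding xs by (intro subseq_drop_many) (simp add: subseq_singleton_left)
qed

lemma sorted_wrt_subseq: "subseq xs ys \<Longrightarrow> sorted_wrt R ys \<Longrightarrow> sorted_wrt R xs"
  by (induct rule: list_emb.induct) (auto dest: list_emb_set)

lemma order_iso_3:
  "order_iso [u,v,w] [p,q,r] \<longleftrightarrow>
     (u < v \<longleftrightarrow> p < q) \<and> (v < u \<longleftrightarrow> q < p) \<and> (u < w \<longleftrightarrow> p < r) \<and>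
     (w < u \<longleftrightarrow> r < p) \<and> (v < w \<longleftrightarrow> q < r) \<and> (w < v \<longleftrightarrow> r < q)"
  by (simp add: order_iso_def All_less_Suc2) blast

lemma length_3_conv: "length ys = 3 \<longleftrightarrow> (\<exists>u v w. ys = [u,v,w])"
  by (auto simp: numeral_3_eq_3 length_Suc_conv)

lemma order_iso_123_iff: "order_iso ys [1,2,3] \<longleftrightarrow> (\<exists>u v w. ys = [u,v,w] \<and> u < v \<and> v < w)"
proof -
  have "order_iso ys [1,2,3] \<Longrightarrow> length ys = 3" by (simp add: order_iso_def)
  then show ?thesis by (auto simp: length_3_conv order_iso_3)
qed

lemma order_iso_321_iff: "order_iso ys [3,2,1] \<longleftrightarrow> (\<exists>u v w. ys = [u,v,w] \<and> u > v \<and> v > w)"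
proof -
  have "order_iso ys [3,2,1] \<Longrightarrow> length ys = 3" by (simp add: order_iso_def)
  then show ?thesis by (auto simp: length_3_conv order_iso_3)
qed

definition has_monotone_triple :: "nat list \<Rightarrow> bool" where
  "has_monotone_triple xs \<longleftrightarrow>
     (\<exists>u v w. subseq [u,v,w] xs \<and> (u < v \<and> v < w \<or> u > v \<and> v > w))"

lemma contains_123_iff: "contains xs [1,2,3] \<longleftrightarrow> (\<exists>u v w. subseq [u,v,w] xs \<and> u < v \<and> v < w)"
  unfolding contains_def order_iso_123_iff by blast

lemma contains_321_iff: "contains xs [3,2,1] \<longleftrightarrow> (\<exists>u v w. subseq [u,v,w] xs \<and> u > v \<and> v > w)"
  unfolding contains_def order_iso_321_iff by blast

text \<open>A definition rather than an abbreviation, so that the simplifier cannot rewrite the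
  numeral 1 inside the patterns.\<close>

definition mono_pats :: "nat list set" where
  "mono_pats = {[1,2,3],[3,2,1]}"

lemma avoids_mono_pats_iff [simp]: "avoids_all mono_pats xs \<longleftrightarrow> \<not> has_monotone_triple xs"
  unfolding avoids_all_def mono_pats_def has_monotone_triple_def ball_simps(7) insert_iff
    contains_123_iff contains_321_iff
  by blast

lemma has_monotone_tripleI:
  "subseq [u,v,w] xs \<Longrightarrow> u < v \<and> v < w \<or> u > v \<and> v > w \<Longrightarrow> has_monotone_triple xs"
  unfolding has_monotone_triple_def by blast

lemma has_monotone_triple_subseq:
  "subseq xs ys \<Longrightarrow> has_monotone_triple xs \<Longrightarrow> has_monotone_triple ys"
  unfolding has_monotone_triple_def by (meson subseq_order.trans)

lemma has_monotone_triple_short: "length xs < 3 \<Longrightarrow> \<not> has_monotone_triple xs"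
  unfolding has_monotone_triple_def by (auto dest: list_emb_length)

lemma has_monotone_triple_3: "has_monotone_triple [p,q,r] \<longleftrightarrow> p < q \<and> q < r \<or> p > q \<and> q > r"
  unfolding has_monotone_triple_def by (auto dest: subseq_same_length)

lemma has_monotone_triple_Cons:
  "has_monotone_triple (x # xs) \<longleftrightarrow> has_monotone_triple xs \<or>
     (\<exists>v w. subseq [v,w] xs \<and> (x < v \<and> v < w \<or> x > v \<and> v > w))"
  unfolding has_monotone_triple_def subseq_Cons_iff by blast

lemma has_monotone_triple_4:
  "has_monotone_triple [p,q,r,t] \<longleftrightarrow>
     has_monotone_triple [q,r,t] \<or> has_monotone_triple [p,r,t] \<or>
     has_monotone_triple [p,q,t] \<or> has_monotone_triple [p,q,r]"
  unfolding has_monotone_triple_Cons[of p] subseq_pair_3 has_monotone_triple_3 by blast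

lemma sorted_wrt_below_max:
  "\<not> has_monotone_triple (n # S) \<Longrightarrow> \<forall>v\<in>set S. v < n \<Longrightarrow> distinct S \<Longrightarrow> sorted_wrt (<) S"
proof (induct S)
  case (Cons p S)
  have "subseq (n # S) (n # p # S)" by (intro subseq_Cons2 list_emb_Cons subseq_order.refl)
  then have "sorted_wrt (<) S"
    using Cons has_monotone_triple_subseq by auto
  moreover have "p < q" if "q \<in> set S" for q
  proof -
    have "subseq [n,p,q] (n # p # S)" using that by (simp add: subseq_singleton_left)
    then have "\<not> (n > p \<and> p > q)" using Cons.prems(1) has_monotone_tripleI by blast
    moreover have "p \<noteq> q" using that Cons.prems(3) by auto
    ultimately show "p < q" using Cons.prems(2) by auto
  qed
  ultimately show ?case by simp
qed simp

lemma below_max_cases: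
  assumes "\<not> has_monotone_triple (n # S)" "\<forall>v\<in>set S. v < n" "distinct S" "S \<noteq> []"
  shows "S = [last S] \<or> (\<exists>s. S = [s, last S] \<and> s < last S)"
proof -
  have sorted: "sorted_wrt (<) S" using assms(1-3) by (rule sorted_wrt_below_max)
  have "length S < 3"
  proof (rule ccontr)
    assume "\<not> length S < 3"
    then obtain p q r S' where S: "S = p # q # r # S'"
      by (auto simp: numeral_3_eq_3 Suc_le_length_iff not_less)
    then have "subseq [p,q,r] (n # S)" by simp
    moreover have "p < q \<and> q < r" using sorted S by simp
    ultimately show False using assms(1) has_monotone_tripleI by blast
  qed
  with assms(4) consider p where "S = [p]" | p q where "S = [p,q]"
    by (cases S; cases "tl S") (auto simp: numeral_3_eq_3)
  then show ?thesis using sorted by cases auto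
qed

section \<open>Reading the input one entry at a time\<close>

declare stack_run.simps(2) [simp del]

fun pops :: "nat list set \<Rightarrow> nat \<Rightarrow> nat list \<Rightarrow> nat list" where
  "pops T c [] = []"
| "pops T c (h # t) = (if avoids_all T (c # h # t) then [] else h # pops T c t)"

definition push_entry :: "nat list set \<Rightarrow> nat \<Rightarrow> nat list \<Rightarrow> nat list" where
  "push_entry T c st = c # drop (length (pops T c st)) st"

lemma stack_run_Cons_input:
  "stack_run T (c # inp) st = pops T c st @ stack_run T inp (push_entry T c st)"
  unfolding push_entry_def by (induct st) (simp_all add: stack_run.simps(2))

lemma pops_append_drop: "pops T c st @ drop (length (pops T c st)) st = st"
  by (induct st) auto

lemma push_entry_avoids:
  "drop (length (pops T c st)) st \<noteq> [] \<Longrightarrow> avoids_all T (push_entry T c st)"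
  unfolding push_entry_def by (induct st) auto

lemma pops_append:
  "length xs \<le> length (pops T c (xs @ ys)) \<Longrightarrow> pops T c (xs @ ys) = xs @ pops T c ys"
  by (induct xs) (auto split: if_splits)

lemma push_entry_append_cases:
  "(\<exists>W'. push_entry T c (W @ B) = c # W' @ B \<and> set W' \<subseteq> set W) \<or>
   push_entry T c (W @ B) = push_entry T c B"
proof (cases "length W \<le> length (pops T c (W @ B))")
  case True
  then show ?thesis by (simp add: push_entry_def pops_append)
next
  case False
  then have "push_entry T c (W @ B) = c # drop (length (pops T c (W @ B))) W @ B"
    by (simp add: push_entry_def)
  then show ?thesis by (meson set_drop_subset)
qed

lemma push_entry_keeps_suffix:
  assumes "B \<noteq> []" "avoids_all T (c # B)"
  shows "\<exists>W'. push_entry T c (W @ B) = c # W' @ B \<and> set W' \<subseteq> set W"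
proof -
  have "push_entry T c B = c # B"
    using assms by (cases B) (simp_all add: push_entry_def)
  then show ?thesis
    using push_entry_append_cases[of T c W B] by (metis append_Nil empty_subsetI list.set(1))
qed

lemma set_stack_run: "set (stack_run T inp st) = set inp \<union> set st"
proof (induct inp arbitrary: st)
  case (Cons c inp)
  have "set st = set (pops T c st) \<union> set (drop (length (pops T c st)) st)"
    by (metis pops_append_drop set_append)
  with Cons show ?case by (auto simp: stack_run_Cons_input push_entry_def)
qed simp

lemma subseq_stack_run: "subseq st (stack_run T inp st)"
proof (induct inp arbitrary: st)
  case (Cons c inp)
  have "subseq (drop (length (pops T c st)) st) (stack_run T inp (push_entry T c st))"
    using Cons[of "push_entry T c st"] unfolding push_entry_def by (rule subseq_Cons')
  then have "subseq (pops T c st @ drop (length (pops T c st)) st) (stack_run T (c # inp) st)"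
    by (simp add: stack_run_Cons_input subseq_append')
  then show ?case by (simp only: pops_append_drop)
qed simp

fun run_output :: "nat list set \<Rightarrow> nat list \<Rightarrow> nat list \<Rightarrow> nat list" where
  "run_output T [] st = []"
| "run_output T (c # L) st = pops T c st @ run_output T L (push_entry T c st)"

abbreviation run_stack :: "nat list set \<Rightarrow> nat list \<Rightarrow> nat list \<Rightarrow> nat list" where
  "run_stack T L st \<equiv> fold (push_entry T) L st"

lemma stack_run_append_input:
  "stack_run T (L @ R) st = run_output T L st @ stack_run T R (run_stack T L st)"
  by (induct L arbitrary: st) (simp_all add: stack_run_Cons_input)

lemma mset_run_output_run_stack:
  "mset (run_output T L st) + mset (run_stack T L st) = mset L + mset st"
proof (induct L arbitrary: st)
  case (Cons c L)
  have step: "mset (pops T c st) + mset (push_entry T c st) = add_mset c (mset st)"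
    using arg_cong[OF pops_append_drop[of T c st], of mset] by (simp add: push_entry_def)
  have "mset (run_output T (c # L) st) + mset (run_stack T (c # L) st) =
      mset (pops T c st) + (mset (run_output T L (push_entry T c st)) +
        mset (run_stack T L (push_entry T c st)))"
    by (simp add: add.assoc)
  also have "\<dots> = mset L + (mset (pops T c st) + mset (push_entry T c st))"
    unfolding Cons by (rule add.left_commute)
  also have "\<dots> = mset (c # L) + mset st"
    by (simp only: step) simp
  finally show ?case .
qed simp

lemma set_run_output_run_stack:
  "set (run_output T L st) \<union> set (run_stack T L st) = set L \<union> set st"
proof -
  have "set_mset (mset (run_output T L st) + mset (run_stack T L st)) = set_mset (mset L + mset st)"
    by (simp only: mset_run_output_run_stack)
  then show ?thesis by simp
qed

lemma distinct_run_stack: "distinct (L @ st) \<Longrightarrow> distinct (run_stack T L st)"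
proof -
  assume "distinct (L @ st)"
  moreover have "mset (run_output T L st @ run_stack T L st) = mset (L @ st)"
    using mset_run_output_run_stack by simp
  ultimately have "distinct (run_output T L st @ run_stack T L st)"
    using mset_eq_imp_distinct_iff by blast
  then show ?thesis by simp
qed

lemma run_stack_keeps_suffix:
  assumes "B \<noteq> []" "\<forall>c\<in>set L. avoids_all T (c # B)"
  shows "\<exists>W'. run_stack T L (W @ B) = W' @ B"
proof (rule fold_invariant[where Q = "\<lambda>c. avoids_all T (c # B)"])
  fix c st
  assume "avoids_all T (c # B)" "\<exists>W'. st = W' @ B"
  then show "\<exists>W'. push_entry T c st = W' @ B"
    using push_entry_keeps_suffix[OF assms(1)] by (metis append_Cons)
qed (use assms in auto)

section \<open>West's map does not sort 231\<close>

definition has_231 :: "nat list \<Rightarrow> bool" where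
  "has_231 xs \<longleftrightarrow> (\<exists>p q r. subseq [p,q,r] xs \<and> r < p \<and> p < q)"

lemma not_avoids_21: "p < q \<Longrightarrow> p \<in> set st \<Longrightarrow> \<not> avoids_all {[2,1]} (q # st)"
proof -
  assume "p < q" "p \<in> set st"
  then have "subseq [q,p] (q # st)" "order_iso [q,p] [2,1]"
    by (auto simp: subseq_singleton_left order_iso_def All_less_Suc2)
  then show ?thesis unfolding avoids_all_def contains_def by blast
qed

text \<open>p has to leave the stack when q arrives, before r is read.\<close>

lemma stack_run_21_keeps_inversion:
  "p \<in> set st \<Longrightarrow> subseq [q,r] inp \<Longrightarrow> r < p \<Longrightarrow> p < q \<Longrightarrow>
   subseq [p,r] (stack_run {[2,1]} inp st)"
proof (induct inp arbitrary: st)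
  case (Cons c inp)
  let ?k = "length (pops {[2,1]} c st)"
  show ?case
  proof (cases "p \<in> set (pops {[2,1]} c st)")
    case True
    have "subseq [r] inp"
      using Cons.prems(2) by (cases "q = c") (auto dest: subseq_Cons')
    then have "r \<in> set inp" by (simp add: subseq_singleton_left)
    then have "r \<in> set (stack_run {[2,1]} inp (push_entry {[2,1]} c st))"
      by (simp add: set_stack_run)
    with True show ?thesis
      by (simp add: stack_run_Cons_input list_emb_append_mono[of _ "[p]" _ "[r]", simplified]
          subseq_singleton_left)
  next
    case False
    then have p_kept: "p \<in> set (drop ?k st)"
      using Cons.prems(1) by (metis Un_iff pops_append_drop set_append)
    moreover have "avoids_all {[2,1]} (c # drop ?k st)"
      using push_entry_avoids[of "{[2,1]}" c st] p_kept unfolding push_entry_def by force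
    ultimately have "c \<noteq> q"
      using not_avoids_21[OF \<open>p < q\<close>] by blast
    then have "subseq [q,r] inp" using Cons.prems(2) by (auto dest: subseq_Cons2_neq)
    moreover have "p \<in> set (push_entry {[2,1]} c st)" using p_kept by (simp add: push_entry_def)
    ultimately show ?thesis
      using Cons by (simp add: stack_run_Cons_input subseq_drop_many)
  qed
qed simp

lemma stack_run_21_231:
  "subseq [p,q,r] inp \<Longrightarrow> r < p \<Longrightarrow> p < q \<Longrightarrow> subseq [p,r] (stack_run {[2,1]} inp st)"
proof (induct inp arbitrary: st)
  case (Cons c inp)
  show ?case
  proof (cases "c = p \<and> subseq [q,r] inp")
    case True
    then show ?thesis
      using stack_run_21_keeps_inversion[of p "push_entry {[2,1]} c st" q r inp] Cons.prems
      by (simp add: stack_run_Cons_input push_entry_def subseq_drop_many)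
  next
    case False
    then have "subseq [p,q,r] inp" using Cons.prems(1) by (auto split: if_splits)
    then show ?thesis using Cons by (simp add: stack_run_Cons_input subseq_drop_many)
  qed
qed simp

lemma west_s_sorted_imp_no_231:
  assumes "west_s y = [1..<n+1]"
  shows "\<not> has_231 y"
proof
  assume "has_231 y"
  then obtain p q r where "subseq [p,q,r] y" "r < p" "p < q" unfolding has_231_def by blast
  then have "subseq [p,r] [1..<n+1]"
    using stack_run_21_231 assms unfolding west_s_def sT_def by metis
  then have "sorted_wrt (<) [p,r]" using sorted_wrt_subseq sorted_wrt_upt by blast
  with \<open>r < p\<close> show False by simp
qed

lemma has_231_if_in_stack:
  "subseq [p,q,r] (run_stack T P st) \<Longrightarrow> r < p \<Longrightarrow> p < q \<Longrightarrow>
   has_231 (stack_run T (P @ R) st)"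
  unfolding stack_run_append_input has_231_def
  by (meson subseq_drop_many subseq_order.trans subseq_stack_run)

lemma has_231_if_output_then_stack:
  assumes "p \<in> set (run_output T P st)" "subseq [q,r] (run_stack T P st)" "r < p" "p < q"
  shows "has_231 (stack_run T (P @ R) st)"
proof -
  have "subseq [q,r] (stack_run T R (run_stack T P st))"
    using assms(2) subseq_stack_run by (rule subseq_order.trans)
  then have "subseq ([p] @ [q,r]) (run_output T P st @ stack_run T R (run_stack T P st))"
    using assms(1) by (intro list_emb_append_mono) (simp_all add: subseq_singleton_left)
  then show ?thesis using assms(3,4) unfolding stack_run_append_input has_231_def by auto
qed

text \<open>A stack of two entries avoids both patterns, so the bottom entry is never popped while
  input remains.\<close>

lemma pops_mono_pats_shorter: "st \<noteq> [] \<Longrightarrow> length (pops mono_pats c st) < length st"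
proof (induct st)
  case (Cons h t)
  then show ?case by (cases t) (auto simp: has_monotone_triple_short)
qed simp

lemma push_entry_mono_pats:
  assumes "st \<noteq> []"
  obtains S where "push_entry mono_pats c st = c # S" "S \<noteq> []" "suffix S st"
    "\<not> has_monotone_triple (c # S)"
proof
  let ?S = "drop (length (pops mono_pats c st)) st"
  show "push_entry mono_pats c st = c # ?S" by (simp add: push_entry_def)
  show "?S \<noteq> []" using pops_mono_pats_shorter[OF assms, of c] by simp
  then show "\<not> has_monotone_triple (c # ?S)"
    using push_entry_avoids by (fastforce simp: push_entry_def)
qed (rule suffix_drop)

lemma run_stack_mono_pats_bottom:
  "st \<noteq> [] \<Longrightarrow> run_stack mono_pats L st \<noteq> [] \<and> last (run_stack mono_pats L st) = last st"
proof (induct L arbitrary: st)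
  case (Cons c L)
  obtain S where "push_entry mono_pats c st = c # S" "S \<noteq> []" "suffix S st"
    using push_entry_mono_pats[OF Cons.prems] by blast
  moreover from this have "last S = last st" by (auto simp: suffix_def)
  ultimately show ?case using Cons.hyps[of "push_entry mono_pats c st"] by simp
qed simp

lemma run_stack_mono_pats_snoc:
  obtains S where "run_stack mono_pats (L @ [c]) [a] = c # S" "S \<noteq> []" "last S = a"
    "suffix S (run_stack mono_pats L [a])" "\<not> has_monotone_triple (c # S)"
proof -
  let ?S1 = "run_stack mono_pats L [a]"
  have S1: "?S1 \<noteq> []" "last ?S1 = a" using run_stack_mono_pats_bottom[of "[a]" L] by simp_all
  obtain S where "push_entry mono_pats c ?S1 = c # S" "S \<noteq> []" "suffix S ?S1"
    "\<not> has_monotone_triple (c # S)"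
    using push_entry_mono_pats[OF S1(1)] by blast
  moreover from this have "last S = a" using S1(2) by (auto simp: suffix_def)
  ultimately show ?thesis using that by simp
qed

lemma push_entry_over_n_s_a:
  "s < a \<Longrightarrow> a < n \<Longrightarrow> c < a \<Longrightarrow>
   push_entry mono_pats c [n,s,a] = (if c < s then [c,a] else [c,n,s,a])"
  by (auto simp: push_entry_def has_monotone_triple_4 has_monotone_triple_3
      has_monotone_triple_short)

lemma push_entry_over_u_a:
  "u < a \<Longrightarrow> c < a \<Longrightarrow> push_entry mono_pats c [u,a] = (if c < u then [c,a] else [c,u,a])"
  by (auto simp: push_entry_def has_monotone_triple_3 has_monotone_triple_short)

section \<open>A 231 pattern in the output\<close>

lemma has_231_if_middle_before_max:
  assumes "b \<in> set L1" "a < b" "b < n"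
  shows "has_231 (stack_run mono_pats (L1 @ n # R) [a])"
proof -
  obtain S where push: "run_stack mono_pats (L1 @ [n]) [a] = n # S" and "S \<noteq> []" "last S = a"
    and top: "\<not> has_monotone_triple (n # S)"
    using run_stack_mono_pats_snoc by blast
  have "b \<notin> set S"
  proof
    assume "b \<in> set S"
    then have "subseq [n,b,a] (n # S)"
      using subseq_last[of b S] \<open>last S = a\<close> assms(2) by simp
    then show False using top assms(2,3) has_monotone_tripleI by blast
  qed
  then have "b \<in> set (run_output mono_pats (L1 @ [n]) [a])"
    using set_run_output_run_stack[of mono_pats "L1 @ [n]" "[a]"] assms push by auto
  moreover have "subseq [n,a] (run_stack mono_pats (L1 @ [n]) [a])"
    using push last_in_set[OF \<open>S \<noteq> []\<close>] \<open>last S = a\<close> by (simp add: subseq_singleton_left)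
  ultimately show ?thesis
    using has_231_if_output_then_stack[of b mono_pats "L1 @ [n]" "[a]" n a R] assms(2,3) by simp
qed

lemma has_231_if_max_on_bottom:
  assumes "run_stack mono_pats P st = [n,a]" "\<forall>c\<in>set L2. c < a" "a < b" "b < n"
  shows "has_231 (stack_run mono_pats (P @ L2 @ b # L3) st)"
proof -
  have "\<forall>c\<in>set L2. avoids_all mono_pats (c # [n,a])"
    using assms(2-4) by (auto simp: has_monotone_triple_3)
  then obtain W where "run_stack mono_pats L2 ([] @ [n,a]) = W @ [n,a]"
    using run_stack_keeps_suffix[of "[n,a]" L2 mono_pats "[]"] by blast
  moreover obtain W' where "push_entry mono_pats b (W @ [n,a]) = b # W' @ [n,a]"
    using push_entry_keeps_suffix[of "[n,a]" mono_pats b W] assms(3,4)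
    by (auto simp: has_monotone_triple_3)
  ultimately have "subseq [b,n,a] (run_stack mono_pats (P @ L2 @ [b]) st)"
    using assms(1) by (simp add: subseq_drop_many)
  then show ?thesis
    using has_231_if_in_stack[of b n a mono_pats "P @ L2 @ [b]" st L3] assms(3,4) by simp
qed

text \<open>In the second alternative n and s have been popped and s has already been output.\<close>

definition shape_after_max :: "nat \<Rightarrow> nat \<Rightarrow> nat \<Rightarrow> nat list \<Rightarrow> bool" where
  "shape_after_max n s a st \<longleftrightarrow>
     (\<exists>W. st = W @ [n,s,a]) \<or> (\<exists>W u. st = W @ [u,a] \<and> u < s \<and> s \<notin> set st)"

lemma shape_after_max_n_s_a: "shape_after_max n s a (W @ [n,s,a])"
  unfolding shape_after_max_def by blast

lemma shape_after_max_u_a: "u < s \<Longrightarrow> s \<notin> set (W @ [u,a]) \<Longrightarrow> shape_after_max n s a (W @ [u,a])"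
  unfolding shape_after_max_def by blast

lemma shape_after_max_push_small:
  assumes "shape_after_max n s a st" "c < a" "c \<noteq> s" "s < a" "a < n"
  shows "shape_after_max n s a (push_entry mono_pats c st)"
proof -
  from assms(1) consider W where "st = W @ [n,s,a]"
    | W u where "st = W @ [u,a]" "u < s" "s \<notin> set st"
    unfolding shape_after_max_def by blast
  then show ?thesis
  proof cases
    case (1 W)
    from push_entry_append_cases[of mono_pats c W "[n,s,a]"]
    consider (kept) W' where "push_entry mono_pats c st = (c # W') @ [n,s,a]"
      | (reset) "push_entry mono_pats c st = push_entry mono_pats c [n,s,a]"
      unfolding 1 by auto
    then show ?thesis
    proof cases
      case kept
      then show ?thesis by (simp only: shape_after_max_n_s_a)
    next
      case reset
      then have "push_entry mono_pats c st = (if c < s then [] @ [c,a] else [c] @ [n,s,a])"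
        using push_entry_over_n_s_a[of s a n c] assms(2,4,5) by simp
      then show ?thesis
        using shape_after_max_u_a[of c s "[]" a n] shape_after_max_n_s_a[of n s a "[c]"] assms(4)
        by auto
    qed
  next
    case (2 W u)
    from push_entry_append_cases[of mono_pats c W "[u,a]"]
    consider (kept) W' where "push_entry mono_pats c st = (c # W') @ [u,a]" "set W' \<subseteq> set W"
      | (reset) "push_entry mono_pats c st = push_entry mono_pats c [u,a]"
      unfolding 2 by auto
    then show ?thesis
    proof cases
      case kept
      then show ?thesis
        unfolding kept(1) using 2 assms(3) by (intro shape_after_max_u_a) auto
    next
      case reset
      then have "push_entry mono_pats c st = (if c < u then [] @ [c,a] else [c] @ [u,a])"
        using push_entry_over_u_a[of u a c] 2 assms(2,4) by simp
      then show ?thesis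
        using shape_after_max_u_a[of c s "[]" a n] shape_after_max_u_a[of u s "[c]" a n]
          2 assms(3,4)
        by auto
    qed
  qed
qed

lemma shape_after_max_push_large:
  assumes "shape_after_max n s a st" "s < a" "a < b" "b < n"
  shows "subseq [b,n,a] (push_entry mono_pats b st) \<or>
    (\<exists>u. u < s \<and> s \<notin> set (push_entry mono_pats b st) \<and> subseq [b,u] (push_entry mono_pats b st))"
proof -
  from assms(1) consider W where "st = W @ [n,s,a]"
    | W u where "st = W @ [u,a]" "u < s" "s \<notin> set st"
    unfolding shape_after_max_def by blast
  then show ?thesis
  proof cases
    case (1 W)
    obtain W' where "push_entry mono_pats b st = b # W' @ [n,s,a]"
      using push_entry_keeps_suffix[of "[n,s,a]" mono_pats b W] 1 assms(2-4)
      by (auto simp: has_monotone_triple_4 has_monotone_triple_3)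
    then show ?thesis by (simp add: subseq_drop_many)
  next
    case (2 W u)
    obtain W' where "push_entry mono_pats b st = b # W' @ [u,a]" "set W' \<subseteq> set W"
      using push_entry_keeps_suffix[of "[u,a]" mono_pats b W] 2 assms(2,3)
      by (auto simp: has_monotone_triple_3)
    then show ?thesis using 2 assms(2,3) by (auto simp: subseq_drop_many)
  qed
qed

lemma has_231_if_max_on_two:
  assumes "run_stack mono_pats P st = [n,s,a]" "s \<notin> set L2" "\<forall>c\<in>set L2. c < a"
    "s < a" "a < b" "b < n"
  shows "has_231 (stack_run mono_pats (P @ L2 @ b # L3) st)"
proof -
  let ?P = "P @ L2 @ [b]"
  have "shape_after_max n s a (run_stack mono_pats L2 [n,s,a])"
  proof (rule fold_invariant[where Q = "\<lambda>c. c < a \<and> c \<noteq> s"])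
    show "shape_after_max n s a [n,s,a]" unfolding shape_after_max_def by (metis append_Nil)
  qed (use assms shape_after_max_push_small in auto)
  then have "subseq [b,n,a] (run_stack mono_pats ?P st) \<or>
    (\<exists>u. u < s \<and> s \<notin> set (run_stack mono_pats ?P st) \<and> subseq [b,u] (run_stack mono_pats ?P st))"
    using shape_after_max_push_large assms(1,4-6) by simp
  then show ?thesis
  proof
    assume "subseq [b,n,a] (run_stack mono_pats ?P st)"
    then show ?thesis using has_231_if_in_stack[of b n a mono_pats ?P st L3] assms(5,6) by simp
  next
    assume "\<exists>u. u < s \<and> s \<notin> set (run_stack mono_pats ?P st) \<and>
      subseq [b,u] (run_stack mono_pats ?P st)"
    then obtain u where u: "u < s" "s \<notin> set (run_stack mono_pats ?P st)"
      "subseq [b,u] (run_stack mono_pats ?P st)" by blast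
    have "s \<in> set P \<union> set st"
      using set_run_output_run_stack[of mono_pats P st] assms(1) by auto
    then have "s \<in> set (run_output mono_pats ?P st)"
      using set_run_output_run_stack[of mono_pats ?P st] u(2) by auto
    then show ?thesis
      using has_231_if_output_then_stack[of s mono_pats ?P st b u L3] u assms(4,5) by simp
  qed
qed

lemma has_231_if_middle_after_max:
  assumes "distinct (L1 @ a # L2)" "\<forall>v\<in>set L1. v < n" "\<forall>c\<in>set L2. c < a" "a < b" "b < n"
  shows "has_231 (stack_run mono_pats (L1 @ n # L2 @ b # L3) [a])"
proof -
  obtain S where push: "run_stack mono_pats (L1 @ [n]) [a] = n # S" and "S \<noteq> []" "last S = a"
    and suffix: "suffix S (run_stack mono_pats L1 [a])" and top: "\<not> has_monotone_triple (n # S)"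
    using run_stack_mono_pats_snoc by blast
  from suffix obtain P where S1: "run_stack mono_pats L1 [a] = P @ S"
    unfolding suffix_def by blast
  have "distinct (P @ S)"
    unfolding S1[symmetric] using assms(1) by (intro distinct_run_stack) simp
  then have "distinct S" by simp
  have S_sub: "set S \<subseteq> set L1 \<union> {a}"
    using set_run_output_run_stack[of mono_pats L1 "[a]"] unfolding S1 by auto
  then have "\<forall>v\<in>set S. v < n" using assms(2,4,5) by auto
  then have "S = [a] \<or> (\<exists>s. S = [s,a] \<and> s < a)"
    using below_max_cases[OF top _ \<open>distinct S\<close> \<open>S \<noteq> []\<close>] \<open>last S = a\<close> by simp
  then consider "S = [a]" | s where "S = [s,a]" "s < a" by blast
  then show ?thesis
  proof cases
    case 1
    then show ?thesis
      using has_231_if_max_on_bottom[of "L1 @ [n]" "[a]" n a L2 b L3] push assms(3-5) by simp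
  next
    case (2 s)
    then have "s \<notin> set L2" using S_sub assms(1) by auto
    then show ?thesis
      using has_231_if_max_on_two[of "L1 @ [n]" "[a]" n s a L2 b L3] push 2 assms(3-5)
      by simp
  qed
qed

lemma has_231_if_first_small:
  assumes "distinct (a # L)" "set (a # L) = {1..n}" "a + 2 \<le> n"
  shows "has_231 (stack_run mono_pats L [a])"
proof -
  have "n \<in> set (a # L)" using assms(2,3) by simp
  then have "n \<in> set L" using assms(3) by auto
  then obtain L1 R where L: "L = L1 @ n # R" by (meson split_list)
  have below_n: "\<forall>v\<in>set L1 \<union> set R. v < n"
  proof
    fix v
    assume v: "v \<in> set L1 \<union> set R"
    then have "v \<le> n" using assms(2) unfolding L by auto
    moreover have "v \<noteq> n" using v assms(1) unfolding L by auto
    ultimately show "v < n" by simp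
  qed
  show ?thesis
  proof (cases "\<exists>v\<in>set R. a < v")
    case True
    then obtain L2 b L3 where R: "R = L2 @ b # L3" "a < b" "\<forall>c\<in>set L2. \<not> a < c"
      using split_list_first_prop[of R "\<lambda>v. a < v"] by blast
    have "\<forall>c\<in>set L2. c < a"
    proof
      fix c
      assume c: "c \<in> set L2"
      then have "\<not> a < c" using R(3) by blast
      moreover have "c \<noteq> a" using c assms(1) unfolding L R by auto
      ultimately show "c < a" by simp
    qed
    moreover have "distinct (L1 @ a # L2)" using assms(1) unfolding L R by auto
    ultimately show ?thesis
      using has_231_if_middle_after_max[of L1 a L2 n b L3] below_n R unfolding L by simp
  next
    case False
    have "n - 1 \<in> set (a # L)" using assms(2,3) by auto
    then have "n - 1 \<in> set L1" using False assms(3) unfolding L by auto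
    then show ?thesis
      using has_231_if_middle_before_max[of "n - 1" L1 a n R] assms(3) unfolding L by simp
  qed
qed

theorem lemma4p2:
  fixes n :: nat and x :: "nat list"
  assumes "n \<ge> 1" and "x \<in> Sort n [1,2,3] [3,2,1]"
  shows "x ! 0 \<in> {n - 1, n}"
proof (rule ccontr)
  assume first: "x ! 0 \<notin> {n - 1, n}"
  have perm: "distinct x" "set x = {1..n}"
    and west_sorted: "west_s (stack_run mono_pats x []) = [1..<n+1]"
    using assms(2) unfolding Sort_def perm_of_def s_pair_def sT_def mono_pats_def by auto
  obtain a L where x: "x = a # L" using perm(2) assms(1) by (cases x) auto
  have "a \<le> n" "a \<noteq> n - 1" "a \<noteq> n" using first perm(2) unfolding x by auto
  then have "a + 2 \<le> n" by linarith
  have "stack_run mono_pats x [] = stack_run mono_pats L [a]"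
    by (simp add: x stack_run_Cons_input push_entry_def)
  then have "has_231 (stack_run mono_pats x [])"
    using has_231_if_first_small perm \<open>a + 2 \<le> n\<close> unfolding x by simp
  then show False using west_s_sorted_imp_no_231 west_sorted by blast
qed

end
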